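(* Let $V\subset Z^n$ be finite, $G$ an Abelian group of order $|V|$, and $\phi:Z^n\to G$ a homomorphism whose restriction to $V$ is a bijection, and let $\mathcal{T}=\{V+l;\ l\in\ker\phi\}$ be the corresponding lattice tiling of $Z^n$. Then $\mathcal{T}$ is $p$-periodic, where $p=\mathrm{lcm}\{\mathrm{ord}(\phi(e_1)),\dots,\mathrm{ord}(\phi(e_n))\}$ and $\mathrm{ord}(g)$ is the order of $g$ in $G$.
   Context: $e_i$ is the $i$-th unit vector of $Z^n$. A set $\mathcal{S}\subset Z^n$ is $p$-periodic ($p>0$) if $s\in\mathcal{S}\iff s+pe_i\in\mathcal{S}$ for all $i=1,\dots,n$, and $p$ is the smallest positive number with this property. A tiling $\{V+l;\ l\in\mathcal{L}\}$ is $p$-periodic if $\mathcal{L}$ is $p$-periodic. *)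

theory Defs
  imports "HOL-Analysis.Analysis" "HOL-Algebra.Algebra"
begin

text \<open>Z^n is rendered as int^'n; the unit vector e_i is axis i 1, so p e_i = axis i p.\<close>

definition has_period :: "(int ^ 'n) set \<Rightarrow> nat \<Rightarrow> bool" where
  "has_period S p \<longleftrightarrow> (\<forall>s i. s \<in> S \<longleftrightarrow> s + axis i (int p) \<in> S)"

definition p_periodic :: "(int ^ 'n) set \<Rightarrow> nat \<Rightarrow> bool" where
  "p_periodic S p \<longleftrightarrow> p > 0 \<and> has_period S p \<and> (\<forall>q. q > 0 \<and> has_period S q \<longrightarrow> p \<le> q)"

definition tiling_p_periodic :: "(int ^ 'n) set \<Rightarrow> (int ^ 'n) set \<Rightarrow> nat \<Rightarrow> bool" where
  "tiling_p_periodic V L p \<longleftrightarrow> p_periodic L p"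

end

theory Submission
  imports Defs
begin

text \<open>The kernel of \<phi> is invariant under the translation by p e_i exactly when
  \<phi>(p e_i) = \<phi>(e_i)^p is trivial, i.e. when ord \<phi>(e_i) divides p. So the periods of the
  kernel are precisely the common multiples of these orders, and the least positive one is
  their lcm, which is positive because G is finite.\<close>

locale add_hom_into_group = group G
  for G :: "('g, 'c) monoid_scheme" (structure) and \<phi> :: "'a::semiring_1 \<Rightarrow> 'g" +
  assumes hom_closed: "\<phi> x \<in> carrier G"
    and hom_add: "\<phi> (x + y) = \<phi> x \<otimes> \<phi> y"
begin

lemma hom_zero: "\<phi> 0 = \<one>"
  by (metis hom_add hom_closed add_0 l_cancel_one')

lemma hom_of_nat_mult: "\<phi> (of_nat k * x) = \<phi> x [^] k"
proof (induction k)
  case 0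
  show ?case by (simp add: hom_zero)
next
  case (Suc k)
  have "of_nat (Suc k) * x = of_nat k * x + x"
    by (simp add: algebra_simps)
  then have "\<phi> (of_nat (Suc k) * x) = \<phi> (of_nat k * x) \<otimes> \<phi> x"
    by (simp add: hom_add)
  with Suc show ?case by (simp add: nat_pow_Suc)
qed

lemma hom_eq_one_iff_translate: "\<phi> (s + t) = \<one> \<longleftrightarrow> \<phi> s = \<one>" if "\<phi> t = \<one>"
  using that by (simp add: hom_add hom_closed)

end

lemma axis_of_nat: "axis i (int k) = of_nat k * axis i 1"
  by (simp add: vec_eq_iff axis_def of_nat_index)

lemma has_period_kernel_iff:
  fixes \<phi> :: "int ^ 'n \<Rightarrow> 'g"
  assumes "add_hom_into_group G \<phi>"
  shows "has_period {l. \<phi> l = \<one>\<^bsub>G\<^esub>} p \<longleftrightarrow> (\<forall>i. group.ord G (\<phi> (axis i 1)) dvd p)"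
proof -
  interpret add_hom_into_group G \<phi> by (fact assms)
  have kernel_axis: "\<phi> (axis i (int p)) = \<one>\<^bsub>G\<^esub> \<longleftrightarrow> ord (\<phi> (axis i 1)) dvd p" for i
    by (simp add: axis_of_nat hom_of_nat_mult pow_eq_id hom_closed)
  have "has_period {l. \<phi> l = \<one>\<^bsub>G\<^esub>} p \<longleftrightarrow> (\<forall>i. \<phi> (axis i (int p)) = \<one>\<^bsub>G\<^esub>)"
  proof
    assume period: "has_period {l. \<phi> l = \<one>\<^bsub>G\<^esub>} p"
    show "\<forall>i. \<phi> (axis i (int p)) = \<one>\<^bsub>G\<^esub>"
    proof
      fix i
      from period have "\<phi> 0 = \<one>\<^bsub>G\<^esub> \<longleftrightarrow> \<phi> (0 + axis i (int p)) = \<one>\<^bsub>G\<^esub>"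
        unfolding has_period_def by blast
      then show "\<phi> (axis i (int p)) = \<one>\<^bsub>G\<^esub>"
        by (simp add: hom_zero)
    qed
  next
    assume "\<forall>i. \<phi> (axis i (int p)) = \<one>\<^bsub>G\<^esub>"
    then show "has_period {l. \<phi> l = \<one>\<^bsub>G\<^esub>} p"
      unfolding has_period_def using hom_eq_one_iff_translate by blast
  qed
  with kernel_axis show ?thesis by (simp only:)
qed

lemma p_periodic_Lcm:
  fixes S :: "(int ^ 'n) set" and A :: "nat set"
  assumes "finite A" "0 \<notin> A"
    and periods: "\<And>p. has_period S p \<longleftrightarrow> (\<forall>a\<in>A. a dvd p)"
  shows "p_periodic S (Lcm A)"
  unfolding p_periodic_def
proof (intro conjI allI impI)
  show "Lcm A > 0"
    using assms(1,2) Lcm_0_iff_nat by (metis gr0I)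
  show "has_period S (Lcm A)"
    by (simp add: periods dvd_Lcm)
  show "Lcm A \<le> q" if "q > 0 \<and> has_period S q" for q
    using that periods by (simp add: Lcm_least dvd_imp_le)
qed

theorem corollary1:
  fixes V :: "(int ^ 'n) set" and G :: "('g, 'b) monoid_scheme" and \<phi> :: "int ^ 'n \<Rightarrow> 'g"
  assumes "finite V"
    and "comm_group G"
    and "order G = card V"
    and "\<forall>x. \<phi> x \<in> carrier G"
    and "\<forall>x y. \<phi> (x + y) = \<phi> x \<otimes>\<^bsub>G\<^esub> \<phi> y"
    and "bij_betw \<phi> V (carrier G)"
  shows "tiling_p_periodic V {l. \<phi> l = \<one>\<^bsub>G\<^esub>}
           (Lcm ((\<lambda>i. group.ord G (\<phi> (axis i 1))) ` UNIV))"
proof -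
  have hom: "add_hom_into_group G \<phi>"
    using assms(2,4,5)
    by (intro add_hom_into_group.intro add_hom_into_group_axioms.intro comm_group.axioms(2)) auto
  then interpret add_hom_into_group G \<phi> .
  have "finite (carrier G)"
    using assms(1,6) bij_betw_finite by blast
  then have "ord (\<phi> (axis i 1)) \<noteq> 0" for i
    using ord_ge_1 hom_closed by (simp add: Suc_le_eq)
  then have orders_nonzero: "0 \<notin> (\<lambda>i. ord (\<phi> (axis i 1))) ` UNIV"
    by (simp add: image_iff)
  show ?thesis
    unfolding tiling_p_periodic_def
    by (rule p_periodic_Lcm[OF _ orders_nonzero]) (simp_all add: has_period_kernel_iff[OF hom])
qed

end
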